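(* The consecutive patterns $\underline{2010}$ and $\underline{2110}$ are reciprocal, and the consecutive patterns $\underline{2110}$ and $\underline{2120}$ are reciprocal. Here two consecutive patterns $p,q$ are reciprocal if for every $n\ge1$ and all $S,T\subseteq[n]$, $$|\{\epsilon\in I_n:\operatorname{Em}(p,\epsilon)=S,\ \operatorname{Em}(q,\epsilon)=T\}|=|\{\epsilon\in I_n:\operatorname{Em}(p,\epsilon)=T,\ \operatorname{Em}(q,\epsilon)=S\}|.$$
   Context: An inversion sequence of length $n$ is an integer sequence $\epsilon=\epsilon_1\cdots\epsilon_n$ with $0\le\epsilon_i<i$ for all $i$; $I_n$ denotes the set of them. The reduction of an integer word is obtained by replacing every occurrence of its $k$-th smallest distinct value by $k-1$. A consecutive pattern $p=\underline{p_1\cdots p_r}$ occurs in a sequence $\epsilon$ at position $i$ if the reduction of $\epsilon_i\epsilon_{i+1}\cdots\epsilon_{i+r-1}$ equals $p_1\cdots p_r$. $\operatorname{Em}(p,\epsilon)$ is the set of all positions at which $p$ occurs in $\epsilon$, and $[n]=\{1,\dots,n\}$. *)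

theory Defs
  imports Main
begin

text \<open>Inversion sequences of length n, as lists e with e!(i-1) < i for i in 1..n
  (i.e. e!j < j+1 for j < n, 0-based list indexing).\<close>
definition inv_seqs :: "nat \<Rightarrow> nat list set" where
  "inv_seqs n = {e. length e = n \<and> (\<forall>j<n. e ! j < Suc j)}"

definition reduction :: "nat list \<Rightarrow> nat list" where
  "reduction w = map (\<lambda>x. card {y \<in> set w. y < x}) w"

definition factor :: "nat list \<Rightarrow> nat \<Rightarrow> nat \<Rightarrow> nat list" where
  "factor e i r = take r (drop (i - 1) e)"

definition Em :: "nat list \<Rightarrow> nat list \<Rightarrow> nat set" where
  "Em p e = {i. 1 \<le> i \<and> i + length p - 1 \<le> length e \<and>
                reduction (factor e i (length p)) = p}"

definition reciprocal :: "nat list \<Rightarrow> nat list \<Rightarrow> bool" where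
  "reciprocal p q \<longleftrightarrow> (\<forall>n\<ge>1. \<forall>S T. S \<subseteq> {1..n} \<longrightarrow> T \<subseteq> {1..n} \<longrightarrow>
     card {e \<in> inv_seqs n. Em p e = S \<and> Em q e = T} =
     card {e \<in> inv_seqs n. Em p e = T \<and> Em q e = S})"

end

theory Submission
  imports Defs
begin

(* By a Moebius inversion over pairs of occurrence sets, reciprocity of p and q reduces to the
   symmetry, in A and B, of the number of inversion sequences containing a prescribed set A of
   occurrences of p and a prescribed set B of occurrences of q. In both pairs of patterns an
   occurrence of p and one of q differ in a single letter, which copies one of two other letters
   of the occurrence. Rewriting that letter at every prescribed occurrence turns the A-occurrences
   into occurrences of q and the B-occurrences into occurrences of p, keeps the entries below
   their bounds, and is undone by the same map with A and B exchanged. *)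

lemma card_supsets_eq_sum_card_fibres:
  fixes F G :: "'a \<Rightarrow> 'b set"
  assumes "finite X" "finite U" "\<And>x. x \<in> X \<Longrightarrow> F x \<subseteq> U \<and> G x \<subseteq> U"
  shows "card {x \<in> X. S \<subseteq> F x \<and> T \<subseteq> G x} =
    (\<Sum>(S', T') \<in> {(S', T'). S \<subseteq> S' \<and> S' \<subseteq> U \<and> T \<subseteq> T' \<and> T' \<subseteq> U}.
       card {x \<in> X. F x = S' \<and> G x = T'})"
    (is "card ?X = sum _ ?P")
proof -
  have "?P \<subseteq> Pow U \<times> Pow U" by auto
  then have "finite ?P" using assms(2) by (meson finite_Pow_iff finite_SigmaI finite_subset)
  moreover have "(\<lambda>x. (F x, G x)) ` ?X \<subseteq> ?P" using assms(3) by auto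
  ultimately have "card ?X = (\<Sum>p \<in> ?P. card {x \<in> ?X. (F x, G x) = p})"
    using sum.group[of ?X ?P "\<lambda>x. (F x, G x)" "\<lambda>_. 1::nat"] assms(1) by simp
  also have "\<dots> = (\<Sum>(S', T') \<in> ?P. card {x \<in> X. F x = S' \<and> G x = T'})"
    by (rule sum.cong) (auto intro!: arg_cong[where f = card])
  finally show ?thesis .
qed

lemma card_fibre_swap_if_card_supsets_swap:
  fixes F G :: "'a \<Rightarrow> 'b set"
  assumes "finite X" "finite U" and range: "\<And>x. x \<in> X \<Longrightarrow> F x \<subseteq> U \<and> G x \<subseteq> U"
    and supsets_swap: "\<And>A B. A \<subseteq> U \<Longrightarrow> B \<subseteq> U \<Longrightarrow>
       card {x \<in> X. A \<subseteq> F x \<and> B \<subseteq> G x} = card {x \<in> X. B \<subseteq> F x \<and> A \<subseteq> G x}"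
    and "S \<subseteq> U" "T \<subseteq> U"
  shows "card {x \<in> X. F x = S \<and> G x = T} = card {x \<in> X. F x = T \<and> G x = S}"
  using \<open>S \<subseteq> U\<close> \<open>T \<subseteq> U\<close>
proof (induction "card (U - S) + card (U - T)" arbitrary: S T rule: less_induct)
  case (less S T)
  define N where "N S' T' = card {x \<in> X. F x = S' \<and> G x = T'}" for S' T'
  define P where "P = {(S', T'). S \<subseteq> S' \<and> S' \<subseteq> U \<and> T \<subseteq> T' \<and> T' \<subseteq> U}"
  have "P \<subseteq> Pow U \<times> Pow U" by (auto simp: P_def)
  then have "finite P" using \<open>finite U\<close> by (meson finite_Pow_iff finite_SigmaI finite_subset)
  have ST: "(S, T) \<in> P" using less.prems by (simp add: P_def)
  have "card {x \<in> X. S \<subseteq> F x \<and> T \<subseteq> G x} = (\<Sum>(S', T') \<in> P. N S' T')"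
    unfolding P_def N_def using assms(1,2) range by (rule card_supsets_eq_sum_card_fibres)
  moreover have "card {x \<in> X. T \<subseteq> F x \<and> S \<subseteq> G x} = (\<Sum>(S', T') \<in> P. N T' S')"
    using card_supsets_eq_sum_card_fibres[of X U G F S T] assms(1,2) range
    by (simp add: P_def N_def conj_commute)
  moreover have "(\<Sum>(S', T') \<in> P - {(S, T)}. N S' T') = (\<Sum>(S', T') \<in> P - {(S, T)}. N T' S')"
  proof (rule sum.cong)
    fix p assume p: "p \<in> P - {(S, T)}"
    obtain S' T' where p_eq: "p = (S', T')" by fastforce
    have sub: "S \<subseteq> S'" "S' \<subseteq> U" "T \<subseteq> T'" "T' \<subseteq> U" and "S' \<noteq> S \<or> T' \<noteq> T"
      using p by (auto simp: P_def p_eq)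
    then have "U - S' \<subset> U - S \<or> U - T' \<subset> U - T" by blast
    moreover have "card (U - S') \<le> card (U - S)" "card (U - T') \<le> card (U - T)"
      using sub \<open>finite U\<close> by (auto intro: card_mono)
    ultimately have "card (U - S') + card (U - T') < card (U - S) + card (U - T)"
      using \<open>finite U\<close> by (meson add_le_less_mono add_less_le_mono finite_Diff psubset_card_mono)
    then show "(case p of (S', T') \<Rightarrow> N S' T') = (case p of (S', T') \<Rightarrow> N T' S')"
      using less.hyps sub by (simp add: N_def p_eq)
  qed simp
  ultimately have "N S T = N T S"
    using supsets_swap[OF less.prems] sum.remove[OF \<open>finite P\<close> ST, of "\<lambda>(S', T'). N S' T'"]
      sum.remove[OF \<open>finite P\<close> ST, of "\<lambda>(S', T'). N T' S'"]
    by (simp only: prod.case)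
  then show ?case by (simp add: N_def)
qed

lemma card_image_eq_if_same_kernel:
  assumes "\<And>x y. x \<in> X \<Longrightarrow> y \<in> X \<Longrightarrow> f x = f y \<longleftrightarrow> g x = g y"
  shows "card (f ` X) = card (g ` X)"
proof (rule bij_betw_same_card)
  show "bij_betw (\<lambda>y. g (inv_into X f y)) (f ` X) (g ` X)"
  proof (rule bij_betwI')
    fix y z assume "y \<in> f ` X" "z \<in> f ` X"
    then show "g (inv_into X f y) = g (inv_into X f z) \<longleftrightarrow> y = z"
      using assms by (metis f_inv_into_f inv_into_into)
  next
    fix y assume "y \<in> f ` X"
    then show "g (inv_into X f y) \<in> g ` X" by (simp add: inv_into_into)
  next
    fix z assume "z \<in> g ` X"
    then obtain x where "x \<in> X" "z = g x" by blast
    then show "\<exists>y \<in> f ` X. z = g (inv_into X f y)"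
      using assms by (metis f_inv_into_f imageI inv_into_into)
  qed
qed

lemma reduction_nth: "i < length w \<Longrightarrow> reduction w ! i = card {y \<in> set w. y < w ! i}"
  by (simp add: reduction_def)

lemma reduction_nth_less_iff:
  assumes "i < length w" "j < length w"
  shows "reduction w ! i < reduction w ! j \<longleftrightarrow> w ! i < w ! j"
proof
  assume less: "w ! i < w ! j"
  have "w ! i \<in> {y \<in> set w. y < w ! j} - {y \<in> set w. y < w ! i}"
    using assms(1) less by simp
  then have "{y \<in> set w. y < w ! i} \<subset> {y \<in> set w. y < w ! j}"
    using less by fastforce
  then show "reduction w ! i < reduction w ! j"
    using assms by (simp add: reduction_nth psubset_card_mono)
next
  assume "reduction w ! i < reduction w ! j"
  moreover have "w ! j \<le> w ! i \<Longrightarrow> reduction w ! j \<le> reduction w ! i"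
    using assms by (simp add: reduction_nth card_mono Collect_mono)
  ultimately show "w ! i < w ! j" by linarith
qed

lemma reduction_eq_iff_same_order:
  assumes "length v = length w"
  shows "reduction v = reduction w \<longleftrightarrow>
    (\<forall>i < length w. \<forall>j < length w. v ! i < v ! j \<longleftrightarrow> w ! i < w ! j)"
proof
  assume "reduction v = reduction w"
  then show "\<forall>i < length w. \<forall>j < length w. v ! i < v ! j \<longleftrightarrow> w ! i < w ! j"
    using assms by (metis reduction_nth_less_iff)
next
  assume order: "\<forall>i < length w. \<forall>j < length w. v ! i < v ! j \<longleftrightarrow> w ! i < w ! j"
  show "reduction v = reduction w"
  proof (rule nth_equalityI)
    fix i assume "i < length (reduction v)"
    then have i: "i < length w" using assms by (simp add: reduction_def)
    have same_eq: "v ! x = v ! y \<longleftrightarrow> w ! x = w ! y" if "x < length w" "y < length w" for x y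
      using order that by (metis linorder_neqE_nat less_irrefl)
    define J where "J = {j. j < length w \<and> w ! j < w ! i}"
    have "{y \<in> set v. y < v ! i} = (!) v ` J" "{y \<in> set w. y < w ! i} = (!) w ` J"
      using i order assms by (auto simp: J_def in_set_conv_nth)
    moreover have "card ((!) v ` J) = card ((!) w ` J)"
      using same_eq by (intro card_image_eq_if_same_kernel) (simp add: J_def)
    ultimately show "reduction v ! i = reduction w ! i"
      using i assms by (simp add: reduction_nth)
  qed (simp add: reduction_def assms)
qed

lemma reduction_conv_filter: "reduction w = map (\<lambda>x. card (set (filter (\<lambda>y. y < x) w))) w"
  by (simp add: reduction_def)

lemma reduction_eq_reduced_iff:
  assumes "reduction p = p" "length w = length p"
  shows "reduction w = p \<longleftrightarrow> (\<forall>i < length p. \<forall>j < length p. w ! i < w ! j \<longleftrightarrow> p ! i < p ! j)"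
  using reduction_eq_iff_same_order[of w p] assms by simp

lemma reduction_2010_iff: "reduction [a, b, c, d] = [2, 0, 1, 0] \<longleftrightarrow> b = d \<and> d < c \<and> c < a"
  by (subst reduction_eq_reduced_iff)
     (auto simp: reduction_conv_filter card_set All_less_Suc numeral_eq_Suc)

lemma reduction_2110_iff: "reduction [a, b, c, d] = [2, 1, 1, 0] \<longleftrightarrow> d < b \<and> b = c \<and> c < a"
  by (subst reduction_eq_reduced_iff)
     (auto simp: reduction_conv_filter card_set All_less_Suc numeral_eq_Suc)

lemma reduction_2120_iff: "reduction [a, b, c, d] = [2, 1, 2, 0] \<longleftrightarrow> d < b \<and> b < a \<and> c = a"
  by (subst reduction_eq_reduced_iff)
     (auto simp: reduction_conv_filter card_set All_less_Suc numeral_eq_Suc)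

lemma factor_4:
  assumes "1 \<le> i" "i + 3 \<le> length e"
  shows "factor e i 4 = [e ! (i - 1), e ! i, e ! (i + 1), e ! (i + 2)]"
proof (rule nth_equalityI)
  fix k assume "k < length (factor e i 4)"
  then have "k = 0 \<or> k = 1 \<or> k = 2 \<or> k = 3" using assms by (auto simp: factor_def)
  then show "factor e i 4 ! k = [e ! (i - 1), e ! i, e ! (i + 1), e ! (i + 2)] ! k"
    using assms by (auto simp: factor_def)
qed (use assms in \<open>simp add: factor_def\<close>)

text \<open>Positions are 1-based: an occurrence at \<open>i\<close> occupies the list indices \<open>i - 1, \<dots>, i + 2\<close>.\<close>
lemma mem_Em_length_4_iff:
  "i \<in> Em [a, b, c, d] e \<longleftrightarrow>
    1 \<le> i \<and> i + 3 \<le> length e \<and> reduction [e ! (i - 1), e ! i, e ! (i + 1), e ! (i + 2)] = [a, b, c, d]"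
  using factor_4[of i e] by (auto simp: Em_def numeral_eq_Suc)

lemma mem_Em_2010_iff:
  "i \<in> Em [2, 0, 1, 0] e \<longleftrightarrow>
    1 \<le> i \<and> i + 3 \<le> length e \<and> e ! i = e ! (i + 2) \<and> e ! (i + 2) < e ! (i + 1) \<and> e ! (i + 1) < e ! (i - 1)"
  unfolding mem_Em_length_4_iff reduction_2010_iff by auto

lemma mem_Em_2110_iff:
  "i \<in> Em [2, 1, 1, 0] e \<longleftrightarrow>
    1 \<le> i \<and> i + 3 \<le> length e \<and> e ! (i + 2) < e ! i \<and> e ! i = e ! (i + 1) \<and> e ! (i + 1) < e ! (i - 1)"
  unfolding mem_Em_length_4_iff reduction_2110_iff by auto

lemma mem_Em_2120_iff:
  "i \<in> Em [2, 1, 2, 0] e \<longleftrightarrow>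
    1 \<le> i \<and> i + 3 \<le> length e \<and> e ! (i + 2) < e ! i \<and> e ! i < e ! (i - 1) \<and> e ! (i + 1) = e ! (i - 1)"
  unfolding mem_Em_length_4_iff reduction_2120_iff by auto

lemma finite_inv_seqs: "finite (inv_seqs n)"
proof -
  have "inv_seqs n \<subseteq> {xs. set xs \<subseteq> {..<n} \<and> length xs = n}"
    by (auto simp: inv_seqs_def in_set_conv_nth) (metis Suc_leI order_less_le_trans)
  then show ?thesis using finite_lists_length_eq[of "{..<n}" n] finite_subset by blast
qed

lemma Em_subset: "e \<in> inv_seqs n \<Longrightarrow> p \<noteq> [] \<Longrightarrow> Em p e \<subseteq> {1..n}"
  by (cases p) (auto simp: Em_def inv_seqs_def)

lemma reciprocalI:
  assumes "p \<noteq> []" "q \<noteq> []"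
    and "\<And>n A B. card {e \<in> inv_seqs n. A \<subseteq> Em p e \<and> B \<subseteq> Em q e} =
                  card {e \<in> inv_seqs n. B \<subseteq> Em p e \<and> A \<subseteq> Em q e}"
  shows "reciprocal p q"
  unfolding reciprocal_def
  using assms Em_subset finite_inv_seqs
  by (intro allI impI card_fibre_swap_if_card_supsets_swap[where U = "{1..n}" for n]) auto

lemma reciprocal_if_trading_involution:
  fixes \<phi> :: "nat set \<Rightarrow> nat set \<Rightarrow> nat list \<Rightarrow> nat list"
  assumes "p \<noteq> []" "q \<noteq> []"
    and trade: "\<And>n A B e. e \<in> inv_seqs n \<Longrightarrow> A \<subseteq> Em p e \<Longrightarrow> B \<subseteq> Em q e \<Longrightarrow>
      \<phi> A B e \<in> inv_seqs n \<and> B \<subseteq> Em p (\<phi> A B e) \<and> A \<subseteq> Em q (\<phi> A B e) \<and> \<phi> B A (\<phi> A B e) = e"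
  shows "reciprocal p q"
proof (rule reciprocalI[OF assms(1,2)])
  fix n A B
  have "bij_betw (\<phi> A B) {e \<in> inv_seqs n. A \<subseteq> Em p e \<and> B \<subseteq> Em q e}
      {e \<in> inv_seqs n. B \<subseteq> Em p e \<and> A \<subseteq> Em q e}"
    by (rule bij_betw_byWitness[where f' = "\<phi> B A"]) (auto dest: trade)
  then show "card {e \<in> inv_seqs n. A \<subseteq> Em p e \<and> B \<subseteq> Em q e} =
      card {e \<in> inv_seqs n. B \<subseteq> Em p e \<and> A \<subseteq> Em q e}"
    by (rule bij_betw_same_card)
qed

text \<open>Occurrences of \<open>2010\<close> and \<open>2110\<close> at \<open>i\<close> agree except in the second letter \<open>e ! i\<close>, which equals
  the fourth resp. the third letter. Trading them means rewriting that letter; at a \<open>2110\<close>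
  occurrence it must become the new fourth letter, which is itself the second letter of an
  occurrence at \<open>i + 2\<close> if there is one, whence the recursion.\<close>
function swap_2010_2110_nth :: "nat set \<Rightarrow> nat set \<Rightarrow> nat list \<Rightarrow> nat \<Rightarrow> nat" where
  "swap_2010_2110_nth A B e j =
    (if j \<in> A then e ! (j + 1)
     else if j \<in> B \<and> j + 2 < length e then swap_2010_2110_nth A B e (j + 2)
     else e ! j)"
  by auto
termination by (relation "measure (\<lambda>(A, B, e, j). length e - j)") auto

declare swap_2010_2110_nth.simps [simp del]

definition swap_2010_2110 :: "nat set \<Rightarrow> nat set \<Rightarrow> nat list \<Rightarrow> nat list" where
  "swap_2010_2110 A B e = map (swap_2010_2110_nth A B e) [0..<length e]"

lemma length_swap_2010_2110 [simp]: "length (swap_2010_2110 A B e) = length e"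
  by (simp add: swap_2010_2110_def)

lemma nth_swap_2010_2110: "j < length e \<Longrightarrow> swap_2010_2110 A B e ! j = swap_2010_2110_nth A B e j"
  by (simp add: swap_2010_2110_def)

lemma swap_2010_2110_nth_first: "j \<in> A \<Longrightarrow> swap_2010_2110_nth A B e j = e ! (j + 1)"
  by (simp add: swap_2010_2110_nth.simps)

lemma swap_2010_2110_nth_second:
  "j \<notin> A \<Longrightarrow> j \<in> B \<Longrightarrow> j + 2 < length e \<Longrightarrow>
    swap_2010_2110_nth A B e j = swap_2010_2110_nth A B e (j + 2)"
  by (simp add: swap_2010_2110_nth.simps)

lemma swap_2010_2110_nth_other: "j \<notin> A \<union> B \<Longrightarrow> swap_2010_2110_nth A B e j = e ! j"
  by (simp add: swap_2010_2110_nth.simps)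

locale marked_2010_2110 =
  fixes A B :: "nat set" and e :: "nat list"
  assumes marked_2010: "A \<subseteq> Em [2, 0, 1, 0] e" and marked_2110: "B \<subseteq> Em [2, 1, 1, 0] e"
begin

lemma occurrence_A: "i \<in> A \<Longrightarrow>
    1 \<le> i \<and> i + 3 \<le> length e \<and> e ! i = e ! (i + 2) \<and> e ! (i + 2) < e ! (i + 1) \<and> e ! (i + 1) < e ! (i - 1)"
  using marked_2010 mem_Em_2010_iff by blast

lemma occurrence_B: "i \<in> B \<Longrightarrow>
    1 \<le> i \<and> i + 3 \<le> length e \<and> e ! (i + 2) < e ! i \<and> e ! i = e ! (i + 1) \<and> e ! (i + 1) < e ! (i - 1)"
  using marked_2110 mem_Em_2110_iff by blast

lemma occurrence: "i \<in> A \<union> B \<Longrightarrow>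
    1 \<le> i \<and> i + 3 \<le> length e \<and> e ! (i + 2) < e ! (i + 1) \<and> e ! (i + 1) < e ! (i - 1) \<and>
    (e ! i = e ! (i + 1) \<or> e ! i = e ! (i + 2))"
  using occurrence_A occurrence_B by fastforce

lemma disjoint: "i \<in> A \<Longrightarrow> i \<notin> B"
  using occurrence_A occurrence_B by fastforce

lemma Suc_not_marked: "i \<in> A \<union> B \<Longrightarrow> Suc i \<notin> A \<union> B"
  using occurrence[of i] occurrence[of "Suc i"] by auto

lemma pred_not_marked: "i \<in> A \<union> B \<Longrightarrow> i - 1 \<notin> A \<union> B"
  using Suc_not_marked occurrence by (metis Suc_diff_1 less_le_trans zero_less_one)

lemma nth_B: "i \<in> B \<Longrightarrow> swap_2010_2110_nth A B e i = swap_2010_2110_nth A B e (i + 2)"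
  using occurrence_B[of i] disjoint by (intro swap_2010_2110_nth_second) auto

lemma nth_bounds: "i \<in> A \<union> B \<Longrightarrow>
    swap_2010_2110_nth A B e i \<le> e ! (i + 1) \<and> swap_2010_2110_nth A B e (i + 2) < e ! (i + 1)"
proof (induction "length e - i" arbitrary: i rule: less_induct)
  case less
  have occ: "i + 3 \<le> length e" "e ! (i + 2) < e ! (i + 1)" using occurrence[OF less.prems] by auto
  have "swap_2010_2110_nth A B e (i + 2) < e ! (i + 1)"
  proof (cases "i + 2 \<in> A \<union> B")
    case True
    then have "swap_2010_2110_nth A B e (i + 2) \<le> e ! (i + 3)"
      using less.hyps[of "i + 2"] occ occurrence[OF True] by (auto simp: numeral_eq_Suc)
    moreover have "e ! (i + 3) < e ! (i + 1)" using occurrence[OF True] by (simp add: numeral_eq_Suc)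
    ultimately show ?thesis by linarith
  next
    case False
    then show ?thesis using swap_2010_2110_nth_other occ by simp
  qed
  moreover have "swap_2010_2110_nth A B e i \<le> e ! (i + 1)"
    using less.prems nth_B calculation by (auto simp: swap_2010_2110_nth_first)
  ultimately show ?case by simp
qed

lemma swap_in_inv_seqs: "e \<in> inv_seqs n \<Longrightarrow> swap_2010_2110 A B e \<in> inv_seqs n"
proof -
  assume "e \<in> inv_seqs n"
  then have len: "length e = n" and bound: "\<And>j. j < n \<Longrightarrow> e ! j < Suc j"
    by (auto simp: inv_seqs_def)
  have "swap_2010_2110_nth A B e j < Suc j" if "j < n" for j
  proof (cases "j \<in> A \<union> B")
    case True
    then have "swap_2010_2110_nth A B e j \<le> e ! (j + 1)" "e ! (j + 1) < e ! (j - 1)" "1 \<le> j"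
      using nth_bounds occurrence by auto
    moreover have "e ! (j - 1) < Suc (j - 1)" using bound that by simp
    ultimately show ?thesis by linarith
  next
    case False
    then show ?thesis using swap_2010_2110_nth_other bound that by simp
  qed
  then show ?thesis using len by (simp add: inv_seqs_def nth_swap_2010_2110)
qed

text \<open>Marked occurrences are at distance at least 2, so only the letters at \<open>i\<close> and \<open>i + 2\<close>
  of a marked occurrence can change.\<close>
lemma swap_around_marked:
  assumes "i \<in> A \<union> B"
  shows "swap_2010_2110 A B e ! (i - 1) = e ! (i - 1)"
    and "swap_2010_2110 A B e ! (i + 1) = e ! (i + 1)"
    and "swap_2010_2110 A B e ! (i + 2) < e ! (i + 1)"
  using occurrence[OF assms] pred_not_marked[OF assms] Suc_not_marked[OF assms] nth_bounds[OF assms]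
  by (auto simp: nth_swap_2010_2110 swap_2010_2110_nth_other)

lemma A_subset_Em_2110: "A \<subseteq> Em [2, 1, 1, 0] (swap_2010_2110 A B e)"
proof
  fix i assume "i \<in> A"
  then have "i \<in> A \<union> B" by simp
  moreover have "swap_2010_2110 A B e ! i = e ! (i + 1)"
    using \<open>i \<in> A\<close> occurrence_A[OF \<open>i \<in> A\<close>]
    by (simp add: swap_2010_2110_nth_first nth_swap_2010_2110)
  ultimately show "i \<in> Em [2, 1, 1, 0] (swap_2010_2110 A B e)"
    using occurrence swap_around_marked unfolding mem_Em_2110_iff by simp
qed

lemma B_subset_Em_2010: "B \<subseteq> Em [2, 0, 1, 0] (swap_2010_2110 A B e)"
proof
  fix i assume "i \<in> B"
  then have "i \<in> A \<union> B" by simp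
  moreover have "swap_2010_2110 A B e ! i = swap_2010_2110 A B e ! (i + 2)"
    using \<open>i \<in> B\<close> occurrence_B[OF \<open>i \<in> B\<close>] by (simp add: nth_B nth_swap_2010_2110)
  ultimately show "i \<in> Em [2, 0, 1, 0] (swap_2010_2110 A B e)"
    using occurrence swap_around_marked unfolding mem_Em_2010_iff by simp
qed

lemma nth_swap_back: "j < length e \<Longrightarrow> swap_2010_2110_nth B A (swap_2010_2110 A B e) j = e ! j"
proof (induction "length e - j" arbitrary: j rule: less_induct)
  case less
  let ?e' = "swap_2010_2110 A B e"
  consider "j \<in> B" | "j \<in> A" | "j \<notin> A \<union> B" by blast
  then show ?case
  proof cases
    case 1
    then have "swap_2010_2110_nth B A ?e' j = ?e' ! (j + 1)" by (simp add: swap_2010_2110_nth_first)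
    also have "\<dots> = e ! j" using 1 swap_around_marked occurrence_B by simp
    finally show ?thesis .
  next
    case 2
    then have "j + 2 < length e" using occurrence_A by fastforce
    then have "swap_2010_2110_nth B A ?e' j = swap_2010_2110_nth B A ?e' (j + 2)"
      using 2 disjoint by (simp add: swap_2010_2110_nth_second)
    also have "\<dots> = e ! (j + 2)" using less.hyps \<open>j + 2 < length e\<close> by simp
    also have "\<dots> = e ! j" using 2 occurrence_A by simp
    finally show ?thesis .
  next
    case 3
    then show ?thesis using less.prems by (simp add: swap_2010_2110_nth_other nth_swap_2010_2110)
  qed
qed

lemma swap_swap: "swap_2010_2110 B A (swap_2010_2110 A B e) = e"
  by (rule nth_equalityI) (simp_all add: nth_swap_2010_2110 nth_swap_back)

end

text \<open>Occurrences of \<open>2110\<close> and \<open>2120\<close> at \<open>i\<close> agree except in the third letter \<open>e ! (i + 1)\<close>,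
  which equals the second resp. the first letter. At a \<open>2110\<close> occurrence it must become the new
  first letter, which is itself the third letter of an occurrence at \<open>i - 2\<close> if there is one.\<close>
function swap_2110_2120_nth :: "nat set \<Rightarrow> nat set \<Rightarrow> nat list \<Rightarrow> nat \<Rightarrow> nat" where
  "swap_2110_2120_nth A B e j =
    (if 2 \<le> j \<and> j - 1 \<in> A then swap_2110_2120_nth A B e (j - 2)
     else if 2 \<le> j \<and> j - 1 \<in> B then e ! (j - 1)
     else e ! j)"
  by auto
termination by (relation "measure (\<lambda>(A, B, e, j). j)") auto

declare swap_2110_2120_nth.simps [simp del]

definition swap_2110_2120 :: "nat set \<Rightarrow> nat set \<Rightarrow> nat list \<Rightarrow> nat list" where
  "swap_2110_2120 A B e = map (swap_2110_2120_nth A B e) [0..<length e]"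

lemma length_swap_2110_2120 [simp]: "length (swap_2110_2120 A B e) = length e"
  by (simp add: swap_2110_2120_def)

lemma nth_swap_2110_2120: "j < length e \<Longrightarrow> swap_2110_2120 A B e ! j = swap_2110_2120_nth A B e j"
  by (simp add: swap_2110_2120_def)

lemma swap_2110_2120_nth_first:
  "i \<in> A \<Longrightarrow> 1 \<le> i \<Longrightarrow> swap_2110_2120_nth A B e (Suc i) = swap_2110_2120_nth A B e (i - 1)"
  by (subst swap_2110_2120_nth.simps) simp

lemma swap_2110_2120_nth_second:
  "i \<notin> A \<Longrightarrow> i \<in> B \<Longrightarrow> 1 \<le> i \<Longrightarrow> swap_2110_2120_nth A B e (Suc i) = e ! i"
  by (subst swap_2110_2120_nth.simps) simp

lemma swap_2110_2120_nth_other: "j - 1 \<notin> A \<union> B \<Longrightarrow> swap_2110_2120_nth A B e j = e ! j"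
  by (subst swap_2110_2120_nth.simps) simp

locale marked_2110_2120 =
  fixes A B :: "nat set" and e :: "nat list"
  assumes marked_2110: "A \<subseteq> Em [2, 1, 1, 0] e" and marked_2120: "B \<subseteq> Em [2, 1, 2, 0] e"
begin

lemma occurrence_A: "i \<in> A \<Longrightarrow>
    1 \<le> i \<and> i + 3 \<le> length e \<and> e ! (i + 2) < e ! i \<and> e ! i = e ! (i + 1) \<and> e ! (i + 1) < e ! (i - 1)"
  using marked_2110 mem_Em_2110_iff by blast

lemma occurrence_B: "i \<in> B \<Longrightarrow>
    1 \<le> i \<and> i + 3 \<le> length e \<and> e ! (i + 2) < e ! i \<and> e ! i < e ! (i - 1) \<and> e ! (i + 1) = e ! (i - 1)"
  using marked_2120 mem_Em_2120_iff by blast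

lemma occurrence: "i \<in> A \<union> B \<Longrightarrow>
    1 \<le> i \<and> i + 3 \<le> length e \<and> e ! (i + 2) < e ! i \<and> e ! i < e ! (i - 1) \<and>
    (e ! (i + 1) = e ! i \<or> e ! (i + 1) = e ! (i - 1))"
  using occurrence_A occurrence_B by fastforce

lemma disjoint: "i \<in> B \<Longrightarrow> i \<notin> A"
  using occurrence_A occurrence_B by fastforce

lemma Suc_not_marked: "i \<in> A \<union> B \<Longrightarrow> Suc i \<notin> A \<union> B"
  using occurrence[of i] occurrence[of "Suc i"] by auto

lemma pred_not_marked: "i \<in> A \<union> B \<Longrightarrow> i - 1 \<notin> A \<union> B"
  using Suc_not_marked occurrence by (metis Suc_diff_1 less_le_trans zero_less_one)

lemma zero_not_marked: "0 \<notin> A \<union> B"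
  using occurrence by fastforce

lemma marked_predE:
  assumes "j - 1 \<in> A \<union> B"
  obtains i where "i \<in> A \<union> B" "j = Suc i" "1 \<le> i"
proof (rule that[of "j - 1"])
  show "1 \<le> j - 1" using occurrence[OF assms] by simp
  then show "j = Suc (j - 1)" by simp
qed (rule assms)

lemma nth_bounds: "i \<in> A \<union> B \<Longrightarrow>
    e ! i < swap_2110_2120_nth A B e (i - 1) \<and> e ! i \<le> swap_2110_2120_nth A B e (i + 1)"
proof (induction i rule: less_induct)
  case (less i)
  have occ: "1 \<le> i" "e ! i < e ! (i - 1)" using occurrence[OF less.prems] by auto
  have "e ! i < swap_2110_2120_nth A B e (i - 1)"
  proof (cases "i - 2 \<in> A \<union> B")
    case True
    then have "e ! (i - 2) \<le> swap_2110_2120_nth A B e (i - 2 + 1)"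
      using less.IH[of "i - 2"] occ by auto
    moreover have "1 \<le> i - 2" using occurrence[OF True] by blast
    then have "i - 2 + 1 = i - 1" "i - 2 + 2 = i" by linarith+
    moreover have "e ! (i - 2 + 2) < e ! (i - 2)" using occurrence[OF True] by blast
    ultimately show ?thesis by simp
  next
    case False
    then have "i - 1 - 1 \<notin> A \<union> B" by (metis diff_diff_add one_add_one)
    then show ?thesis using occ by (simp add: swap_2110_2120_nth_other)
  qed
  moreover have "e ! i \<le> swap_2110_2120_nth A B e (i + 1)"
    using less.prems occ calculation disjoint
    by (auto simp: swap_2110_2120_nth_first swap_2110_2120_nth_second)
  ultimately show ?case by simp
qed

lemma swap_in_inv_seqs: "e \<in> inv_seqs n \<Longrightarrow> swap_2110_2120 A B e \<in> inv_seqs n"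
proof -
  assume "e \<in> inv_seqs n"
  then have len: "length e = n" and bound: "\<And>j. j < n \<Longrightarrow> e ! j < Suc j"
    by (auto simp: inv_seqs_def)
  have "swap_2110_2120_nth A B e j < Suc j" if "j < n" for j
    using that
  proof (induction j rule: less_induct)
    case (less j)
    show ?case
    proof (cases "j - 1 \<in> A \<union> B")
      case True
      then obtain i where i: "i \<in> A \<union> B" "j = Suc i" "1 \<le> i" by (rule marked_predE)
      show ?thesis
      proof (cases "i \<in> A")
        case True
        then have "swap_2110_2120_nth A B e j = swap_2110_2120_nth A B e (i - 1)"
          using i by (simp add: swap_2110_2120_nth_first)
        moreover have "swap_2110_2120_nth A B e (i - 1) < Suc (i - 1)"
          using less.IH[of "i - 1"] less.prems i by simp
        ultimately show ?thesis using i by linarith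
      next
        case False
        then have "swap_2110_2120_nth A B e j = e ! i"
          using i by (simp add: swap_2110_2120_nth_second)
        then show ?thesis using bound[of i] less.prems i by simp
      qed
    next
      case False
      then show ?thesis using bound less.prems by (simp add: swap_2110_2120_nth_other)
    qed
  qed
  then show ?thesis using len by (simp add: inv_seqs_def nth_swap_2110_2120)
qed

lemma swap_around_marked:
  assumes "i \<in> A \<union> B"
  shows "swap_2110_2120 A B e ! i = e ! i"
    and "swap_2110_2120 A B e ! (i + 2) = e ! (i + 2)"
    and "e ! i < swap_2110_2120 A B e ! (i - 1)"
  using occurrence[OF assms] pred_not_marked[OF assms] Suc_not_marked[OF assms] nth_bounds[OF assms]
  by (auto simp: nth_swap_2110_2120 swap_2110_2120_nth_other)

lemma A_subset_Em_2120: "A \<subseteq> Em [2, 1, 2, 0] (swap_2110_2120 A B e)"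
proof
  fix i assume "i \<in> A"
  then have "i \<in> A \<union> B" by simp
  moreover have "swap_2110_2120 A B e ! (i + 1) = swap_2110_2120 A B e ! (i - 1)"
    using \<open>i \<in> A\<close> occurrence_A[OF \<open>i \<in> A\<close>]
    by (auto simp: swap_2110_2120_nth_first nth_swap_2110_2120)
  ultimately show "i \<in> Em [2, 1, 2, 0] (swap_2110_2120 A B e)"
    using occurrence swap_around_marked unfolding mem_Em_2120_iff by simp
qed

lemma B_subset_Em_2110: "B \<subseteq> Em [2, 1, 1, 0] (swap_2110_2120 A B e)"
proof
  fix i assume "i \<in> B"
  then have "i \<in> A \<union> B" by simp
  moreover have "swap_2110_2120 A B e ! (i + 1) = e ! i"
    using \<open>i \<in> B\<close> occurrence_B[OF \<open>i \<in> B\<close>] disjoint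
    by (simp add: swap_2110_2120_nth_second nth_swap_2110_2120)
  ultimately show "i \<in> Em [2, 1, 1, 0] (swap_2110_2120 A B e)"
    using occurrence swap_around_marked unfolding mem_Em_2110_iff by simp
qed

lemma nth_swap_back: "j < length e \<Longrightarrow> swap_2110_2120_nth B A (swap_2110_2120 A B e) j = e ! j"
proof (induction j rule: less_induct)
  case (less j)
  let ?e' = "swap_2110_2120 A B e"
  show ?case
  proof (cases "j - 1 \<in> A \<union> B")
    case True
    then obtain i where i: "i \<in> A \<union> B" "j = Suc i" "1 \<le> i" by (rule marked_predE)
    show ?thesis
    proof (cases "i \<in> B")
      case True
      then have "swap_2110_2120_nth B A ?e' j = swap_2110_2120_nth B A ?e' (i - 1)"
        using i by (simp add: swap_2110_2120_nth_first)
      also have "\<dots> = e ! (i - 1)" using i less by simp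
      also have "\<dots> = e ! j" using True i occurrence_B by simp
      finally show ?thesis .
    next
      case False
      then have "swap_2110_2120_nth B A ?e' j = ?e' ! i"
        using i less.prems by (simp add: swap_2110_2120_nth_second nth_swap_2110_2120)
      also have "\<dots> = e ! j" using False i occurrence_A swap_around_marked by simp
      finally show ?thesis .
    qed
  next
    case False
    then show ?thesis using less.prems zero_not_marked
      by (simp add: swap_2110_2120_nth_other nth_swap_2110_2120)
  qed
qed

lemma swap_swap: "swap_2110_2120 B A (swap_2110_2120 A B e) = e"
  by (rule nth_equalityI) (simp_all add: nth_swap_2110_2120 nth_swap_back)

end

theorem mainTheorem2:
  shows "reciprocal [2,0,1,0] [2,1,1,0] \<and> reciprocal [2,1,1,0] [2,1,2,0]"
proof
  show "reciprocal [2,0,1,0] [2,1,1,0]"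
  proof (rule reciprocal_if_trading_involution[where \<phi> = swap_2010_2110])
    fix n A B e
    assume "A \<subseteq> Em [2, 0, 1, 0] e" "B \<subseteq> Em [2, 1, 1, 0] e"
    then interpret marked_2010_2110 A B e by unfold_locales
    show "e \<in> inv_seqs n \<Longrightarrow> swap_2010_2110 A B e \<in> inv_seqs n \<and>
        B \<subseteq> Em [2, 0, 1, 0] (swap_2010_2110 A B e) \<and> A \<subseteq> Em [2, 1, 1, 0] (swap_2010_2110 A B e) \<and>
        swap_2010_2110 B A (swap_2010_2110 A B e) = e"
      using swap_in_inv_seqs B_subset_Em_2010 A_subset_Em_2110 swap_swap by blast
  qed simp_all
  show "reciprocal [2,1,1,0] [2,1,2,0]"
  proof (rule reciprocal_if_trading_involution[where \<phi> = swap_2110_2120])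
    fix n A B e
    assume "A \<subseteq> Em [2, 1, 1, 0] e" "B \<subseteq> Em [2, 1, 2, 0] e"
    then interpret marked_2110_2120 A B e by unfold_locales
    show "e \<in> inv_seqs n \<Longrightarrow> swap_2110_2120 A B e \<in> inv_seqs n \<and>
        B \<subseteq> Em [2, 1, 1, 0] (swap_2110_2120 A B e) \<and> A \<subseteq> Em [2, 1, 2, 0] (swap_2110_2120 A B e) \<and>
        swap_2110_2120 B A (swap_2110_2120 A B e) = e"
      using swap_in_inv_seqs B_subset_Em_2110 A_subset_Em_2120 swap_swap by blast
  qed simp_all
qed

end
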